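(* Let $p \ge 3$ and let $B_p$ be the graph obtained from the complete bipartite graph $K_{p,p}$ by deleting the edges of a perfect matching. Then $B_p$ is $(K_4, \text{diamond}, \text{paw}, \text{co-claw}, \text{co-diamond})$-free, $B_p$ is $2$-colourable, and $B_p$ has a frozen $p$-colouring.
   Context: All graphs are finite and simple. A $k$-colouring is a proper colouring with colours $\{1,\dots,k\}$. A $k$-colouring is frozen if, for every vertex $v$, all $k$ colours appear in the closed neighbourhood of $v$. $\mathcal{H}$-free means no induced subgraph isomorphic to a member of $\mathcal{H}$. The diamond is $K_4$ minus an edge; the paw is a triangle with a pendant vertex attached to one triangle vertex; the co-claw is $K_3+K_1$; the co-diamond is $K_2+2K_1$ (one edge plus two isolated vertices). *)

theory Defs
  imports Main
begin

definition simple_graph :: "'a set \<Rightarrow> ('a \<Rightarrow> 'a \<Rightarrow> bool) \<Rightarrow> bool" where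
  "simple_graph V E \<longleftrightarrow> finite V \<and> (\<forall>x\<in>V. \<forall>y\<in>V. E x y \<longleftrightarrow> E y x) \<and> (\<forall>x\<in>V. \<not> E x x)"

definition has_induced_copy ::
  "'b set \<Rightarrow> ('b \<Rightarrow> 'b \<Rightarrow> bool) \<Rightarrow> 'a set \<Rightarrow> ('a \<Rightarrow> 'a \<Rightarrow> bool) \<Rightarrow> bool" where
  "has_induced_copy VH EH V E \<longleftrightarrow>
     (\<exists>f. inj_on f VH \<and> f ` VH \<subseteq> V \<and> (\<forall>x\<in>VH. \<forall>y\<in>VH. E (f x) (f y) \<longleftrightarrow> EH x y))"

definition H_free :: "'b set \<Rightarrow> ('b \<Rightarrow> 'b \<Rightarrow> bool) \<Rightarrow> 'a set \<Rightarrow> ('a \<Rightarrow> 'a \<Rightarrow> bool) \<Rightarrow> bool" where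
  "H_free VH EH V E \<longleftrightarrow> \<not> has_induced_copy VH EH V E"

definition four_verts :: "nat set" where "four_verts = {0,1,2,3}"

definition K4_edge :: "nat \<Rightarrow> nat \<Rightarrow> bool" where
  "K4_edge x y \<longleftrightarrow> x \<noteq> y"

definition diamond_edge :: "nat \<Rightarrow> nat \<Rightarrow> bool" where
  "diamond_edge x y \<longleftrightarrow> x \<noteq> y \<and> {x,y} \<noteq> {2,3}"

definition paw_edge :: "nat \<Rightarrow> nat \<Rightarrow> bool" where
  "paw_edge x y \<longleftrightarrow> x \<noteq> y \<and> ({x,y} \<subseteq> {0,1,2} \<or> {x,y} = {0,3})"

text \<open>co-claw = K3 + K1: triangle 0,1,2 and isolated vertex 3\<close>
definition coclaw_edge :: "nat \<Rightarrow> nat \<Rightarrow> bool" where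
  "coclaw_edge x y \<longleftrightarrow> x \<noteq> y \<and> {x,y} \<subseteq> {0,1,2}"

text \<open>co-diamond = K2 + 2K1: edge 0-1, isolated vertices 2,3\<close>
definition codiamond_edge :: "nat \<Rightarrow> nat \<Rightarrow> bool" where
  "codiamond_edge x y \<longleftrightarrow> {x,y} = {0,1}"

definition is_colouring :: "nat \<Rightarrow> 'a set \<Rightarrow> ('a \<Rightarrow> 'a \<Rightarrow> bool) \<Rightarrow> ('a \<Rightarrow> nat) \<Rightarrow> bool" where
  "is_colouring k V E c \<longleftrightarrow> (\<forall>v\<in>V. c v \<in> {1..k}) \<and> (\<forall>u\<in>V. \<forall>v\<in>V. E u v \<longrightarrow> c u \<noteq> c v)"

definition colourable :: "nat \<Rightarrow> 'a set \<Rightarrow> ('a \<Rightarrow> 'a \<Rightarrow> bool) \<Rightarrow> bool" where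
  "colourable k V E \<longleftrightarrow> (\<exists>c. is_colouring k V E c)"

definition closed_nbhd :: "'a set \<Rightarrow> ('a \<Rightarrow> 'a \<Rightarrow> bool) \<Rightarrow> 'a \<Rightarrow> 'a set" where
  "closed_nbhd V E v = insert v {u\<in>V. E v u}"

definition frozen_colouring :: "nat \<Rightarrow> 'a set \<Rightarrow> ('a \<Rightarrow> 'a \<Rightarrow> bool) \<Rightarrow> ('a \<Rightarrow> nat) \<Rightarrow> bool" where
  "frozen_colouring k V E c \<longleftrightarrow> is_colouring k V E c \<and>
     (\<forall>v\<in>V. {1..k} \<subseteq> c ` closed_nbhd V E v)"

text \<open>B_p: K_{p,p} minus a perfect matching. Vertices (side, index) with index < p;
  (a,i) ~ (b,j) iff a \<noteq> b and i \<noteq> j (the removed matching is {(False,i),(True,i)}).\<close>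
definition Bp_verts :: "nat \<Rightarrow> (bool \<times> nat) set" where
  "Bp_verts p = UNIV \<times> {..<p}"

definition Bp_edge :: "bool \<times> nat \<Rightarrow> bool \<times> nat \<Rightarrow> bool" where
  "Bp_edge x y \<longleftrightarrow> fst x \<noteq> fst y \<and> snd x \<noteq> snd y"

end

theory Submission
  imports Defs
begin

text \<open>B_p is bipartite, hence triangle-free, which excludes K4, diamond, paw and co-claw.
  Two vertices of B_p are non-adjacent iff they lie on the same side or have the same
  index; so the only vertices anticomplete to an edge (a,i)(\<not>a,j) are (a,j) and (\<not>a,i),
  and these are adjacent, which excludes the co-diamond. Colouring each vertex by its index
  is a frozen p-colouring: every index other than that of (a,i) occurs in the other side's
  neighbourhood.\<close>

lemma has_induced_copy_triangle:
  assumes "has_induced_copy VH EH V E"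
    and "a \<in> VH" "b \<in> VH" "c \<in> VH" "EH a b" "EH b c" "EH a c"
  shows "\<exists>x\<in>V. \<exists>y\<in>V. \<exists>z\<in>V. E x y \<and> E y z \<and> E x z"
proof -
  obtain f where "f ` VH \<subseteq> V" "\<forall>x\<in>VH. \<forall>y\<in>VH. E (f x) (f y) \<longleftrightarrow> EH x y"
    using assms(1) unfolding has_induced_copy_def by blast
  with assms(2-) show ?thesis by blast
qed

lemma has_induced_copy_codiamond:
  assumes "has_induced_copy four_verts codiamond_edge V E"
  shows "\<exists>x y z w. z \<noteq> w \<and> E x y \<and> \<not> E x z \<and> \<not> E y z \<and> \<not> E x w \<and> \<not> E y w \<and> \<not> E z w"
proof -
  obtain f where inj: "inj_on f four_verts"
    and copy: "\<forall>x\<in>four_verts. \<forall>y\<in>four_verts. E (f x) (f y) \<longleftrightarrow> codiamond_edge x y"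
    using assms unfolding has_induced_copy_def by blast
  have "f 2 \<noteq> f 3"
    using inj unfolding inj_on_def four_verts_def by fastforce
  moreover have "E (f 0) (f 1)" "\<not> E (f 0) (f 2)" "\<not> E (f 1) (f 2)"
    "\<not> E (f 0) (f 3)" "\<not> E (f 1) (f 3)" "\<not> E (f 2) (f 3)"
    using copy by (auto simp: four_verts_def codiamond_edge_def doubleton_eq_iff)
  ultimately show ?thesis by blast
qed

lemma Bp_edge_triangle_free: "\<not> (Bp_edge x y \<and> Bp_edge y z \<and> Bp_edge x z)"
  unfolding Bp_edge_def by auto

lemma H_free_Bp_if_triangle:
  assumes "a \<in> VH" "b \<in> VH" "c \<in> VH" "EH a b" "EH b c" "EH a c"
  shows "H_free VH EH (Bp_verts p) Bp_edge"
  using has_induced_copy_triangle[OF _ assms] Bp_edge_triangle_free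
  unfolding H_free_def by blast

lemma Bp_non_neighbour_of_edge:
  assumes "Bp_edge x y" "\<not> Bp_edge x z" "\<not> Bp_edge y z"
  shows "z = (fst x, snd y) \<or> z = (fst y, snd x)"
  using assms unfolding Bp_edge_def by (cases x; cases y; cases z) auto

lemma Bp_codiamond_free: "H_free four_verts codiamond_edge (Bp_verts p) Bp_edge"
  unfolding H_free_def
proof
  assume "has_induced_copy four_verts codiamond_edge (Bp_verts p) Bp_edge"
  then obtain x y z w where "z \<noteq> w" "Bp_edge x y" "\<not> Bp_edge z w"
    "\<not> Bp_edge x z" "\<not> Bp_edge y z" "\<not> Bp_edge x w" "\<not> Bp_edge y w"
    using has_induced_copy_codiamond by blast
  then have "{z, w} = {(fst x, snd y), (fst y, snd x)}"
    using Bp_non_neighbour_of_edge by blast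
  with \<open>Bp_edge x y\<close> \<open>\<not> Bp_edge z w\<close> show False
    unfolding Bp_edge_def doubleton_eq_iff by auto
qed

lemma Bp_colourable_2: "colourable 2 (Bp_verts p) Bp_edge"
  unfolding colourable_def is_colouring_def
  by (rule exI[of _ "\<lambda>x. if fst x then 1 else 2"]) (auto simp: Bp_edge_def)

lemma Bp_frozen_colouring: "frozen_colouring p (Bp_verts p) Bp_edge (\<lambda>x. snd x + 1)"
  unfolding frozen_colouring_def is_colouring_def
proof (intro conjI ballI subsetI)
  fix v k assume "v \<in> Bp_verts p" and k: "k \<in> {1..p}"
  obtain a i where v: "v = (a, i)" by (cases v)
  show "k \<in> (\<lambda>x. snd x + 1) ` closed_nbhd (Bp_verts p) Bp_edge v"
  proof (cases "k = i + 1")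
    case True
    then show ?thesis by (auto simp: closed_nbhd_def v)
  next
    case False
    then have "(\<not> a, k - 1) \<in> closed_nbhd (Bp_verts p) Bp_edge v"
      using k by (auto simp: closed_nbhd_def v Bp_verts_def Bp_edge_def)
    moreover have "k = snd (\<not> a, k - 1) + 1"
      using k by auto
    ultimately show ?thesis by blast
  qed
qed (auto simp: Bp_verts_def Bp_edge_def)

theorem lemma2:
  fixes p :: nat
  assumes "p \<ge> 3"
  shows "H_free four_verts K4_edge (Bp_verts p) Bp_edge
       \<and> H_free four_verts diamond_edge (Bp_verts p) Bp_edge
       \<and> H_free four_verts paw_edge (Bp_verts p) Bp_edge
       \<and> H_free four_verts coclaw_edge (Bp_verts p) Bp_edge
       \<and> H_free four_verts codiamond_edge (Bp_verts p) Bp_edge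
       \<and> colourable 2 (Bp_verts p) Bp_edge
       \<and> (\<exists>c. frozen_colouring p (Bp_verts p) Bp_edge c)"
proof (intro conjI)
  have triangle: "0 \<in> four_verts" "1 \<in> four_verts" "2 \<in> four_verts"
    by (simp_all add: four_verts_def)
  show "H_free four_verts K4_edge (Bp_verts p) Bp_edge"
    by (rule H_free_Bp_if_triangle[OF triangle]) (simp_all add: K4_edge_def)
  show "H_free four_verts diamond_edge (Bp_verts p) Bp_edge"
    by (rule H_free_Bp_if_triangle[OF triangle]) (simp_all add: diamond_edge_def doubleton_eq_iff)
  show "H_free four_verts paw_edge (Bp_verts p) Bp_edge"
    by (rule H_free_Bp_if_triangle[OF triangle]) (simp_all add: paw_edge_def)
  show "H_free four_verts coclaw_edge (Bp_verts p) Bp_edge"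
    by (rule H_free_Bp_if_triangle[OF triangle]) (simp_all add: coclaw_edge_def)
  show "H_free four_verts codiamond_edge (Bp_verts p) Bp_edge"
    by (rule Bp_codiamond_free)
  show "colourable 2 (Bp_verts p) Bp_edge"
    by (rule Bp_colourable_2)
  show "\<exists>c. frozen_colouring p (Bp_verts p) Bp_edge c"
    using Bp_frozen_colouring by blast
qed

end
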